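(* Let $(\mathbf{Z}_\kappa,\Sigma)$ be a ring of Euclidean integers for the infinite cardinal $\kappa$. Let $\eta,\gamma<\kappa$ and let $\mathbf{x}\in\mathbb{Z}^\kappa$ satisfy $x_\alpha=0$ for all $\alpha\ge 2^\eta$. Define $\mathbf{y}\in\mathbb{Z}^\kappa$ by $y_\delta=x_\alpha$ if $\delta=2^\eta\gamma+\alpha$ for some $\alpha<2^\eta$, and $y_\delta=0$ otherwise. Then $\sum_\alpha x_\alpha=\sum_\delta y_\delta$.
   Context: Ordinal arithmetic ($2^\eta$, $2^\eta\gamma+\alpha$) is ordinary ordinal arithmetic. Every ordinal $\alpha$ has a unique base-2 normal form $\alpha=2^{\alpha_1}+\dots+2^{\alpha_n}$ with $\alpha_1>\dots>\alpha_n$; put $L_\alpha=\{\alpha_1,\dots,\alpha_n\}$. Formal inclusion: $\alpha\sqsubseteq\beta$ iff $L_\alpha\subseteq L_\beta$. $\alpha\vee\beta$ is the ordinal $\gamma$ with $L_\gamma=L_\alpha\cup L_\beta$. For $\mathbf{x}\in\mathbb{Z}^\kappa$, $\mathbf{f}_{\mathbf{x}}(\alpha)=\sum_{\beta\sqsubseteq\alpha}x_\beta$. A ring of Euclidean integers for $\kappa$ is a discretely ordered commutative integral domain $\mathbf{Z}_\kappa$ containing $\mathbb{Z}$ as an ordered subring, together with a map $\Sigma:\mathbb{Z}^\kappa\to\mathbf{Z}_\kappa$, written $\Sigma(\mathbf{x})=\sum_\alpha x_\alpha$, such that: (0) if only finitely many $x_\alpha\neq0$ then $\sum_\alpha x_\alpha$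 is the ordinary finite sum; (RA) every element of $\mathbf{Z}_\kappa$ is $\sum_\alpha x_\alpha$ for some $\mathbf{x}$; (LA) $u\sum_\alpha x_\alpha+v\sum_\alpha y_\alpha=\sum_\alpha(ux_\alpha+vy_\alpha)$ for $u,v\in\mathbb{Z}$; (CA) if there is $\theta<\kappa$ with $\mathbf{f}_{\mathbf{x}}(\delta)\le\mathbf{f}_{\mathbf{y}}(\delta)$ for all $\delta<\kappa$ with $\theta\sqsubseteq\delta$, then $\sum_\alpha x_\alpha\le\sum_\alpha y_\alpha$; (PA) $(\sum_\alpha x_\alpha)(\sum_\beta y_\beta)=\sum_\gamma z_\gamma$ with $z_\gamma=\sum_{\alpha\vee\beta=\gamma}x_\alpha y_\beta$. *)

theory Defs
  imports Main
begin

text \<open>Ordinals below the infinite cardinal kappa are modelled as the elements of a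
  type 'k of class wellorder whose natural order is a cardinal order (card_order)
  on an infinite universe.\<close>

definition ord_iso_on :: "('a \<Rightarrow> 'a \<Rightarrow> bool) \<Rightarrow> 'a set \<Rightarrow> ('b \<Rightarrow> 'b \<Rightarrow> bool) \<Rightarrow> 'b set \<Rightarrow> bool" where
  "ord_iso_on lA A lB B \<longleftrightarrow>
     (\<exists>f. bij_betw f A B \<and> (\<forall>a\<in>A. \<forall>b\<in>A. lA a b \<longleftrightarrow> lB (f a) (f b)))"

definition ozero :: "'k::wellorder" where
  "ozero = (LEAST x. True)"

definition is_oadd :: "'k::wellorder \<Rightarrow> 'k \<Rightarrow> 'k \<Rightarrow> bool" where
  "is_oadd \<alpha> \<beta> \<delta> \<longleftrightarrow> \<alpha> \<le> \<delta> \<and> ord_iso_on (<) {x. x < \<beta>} (<) {x. \<alpha> \<le> x \<and> x < \<delta>}"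

text \<open>delta = alpha * beta: order type of beta x alpha, lexicographic with beta major.\<close>
definition lexless :: "'k::wellorder \<times> 'k \<Rightarrow> 'k \<times> 'k \<Rightarrow> bool" where
  "lexless p q \<longleftrightarrow> fst p < fst q \<or> (fst p = fst q \<and> snd p < snd q)"

definition is_omul :: "'k::wellorder \<Rightarrow> 'k \<Rightarrow> 'k \<Rightarrow> bool" where
  "is_omul \<alpha> \<beta> \<delta> \<longleftrightarrow> ord_iso_on lexless ({x. x < \<beta>} \<times> {x. x < \<alpha>}) (<) {x. x < \<delta>}"

text \<open>delta = 2^eta: order type of the finite subsets of eta (finitely supported
  functions eta -> 2), compared at the largest point of difference.\<close>
definition finless :: "'k::wellorder set \<Rightarrow> 'k set \<Rightarrow> bool" where
  "finless A B \<longleftrightarrow> A \<noteq> B \<and> Max ((A - B) \<union> (B - A)) \<in> B"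

definition is_opow2 :: "'k::wellorder \<Rightarrow> 'k \<Rightarrow> bool" where
  "is_opow2 \<eta> \<delta> \<longleftrightarrow> ord_iso_on finless {A. finite A \<and> A \<subseteq> {x. x < \<eta>}} (<) {x. x < \<delta>}"

definition oadd :: "'k::wellorder \<Rightarrow> 'k \<Rightarrow> 'k" where
  "oadd \<alpha> \<beta> = (THE \<delta>. is_oadd \<alpha> \<beta> \<delta>)"

definition omul :: "'k::wellorder \<Rightarrow> 'k \<Rightarrow> 'k" where
  "omul \<alpha> \<beta> = (THE \<delta>. is_omul \<alpha> \<beta> \<delta>)"

definition opow2 :: "'k::wellorder \<Rightarrow> 'k" where
  "opow2 \<eta> = (THE \<delta>. is_opow2 \<eta> \<delta>)"

fun is_nfsum :: "'k::wellorder list \<Rightarrow> 'k \<Rightarrow> bool" where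
  "is_nfsum [] \<delta> \<longleftrightarrow> \<delta> = ozero"
| "is_nfsum (e # es) \<delta> \<longleftrightarrow> (\<exists>p q. is_opow2 e p \<and> is_nfsum es q \<and> is_oadd p q \<delta>)"

definition Lset :: "'k::wellorder \<Rightarrow> 'k set" where
  "Lset \<alpha> = (THE E. finite E \<and> is_nfsum (rev (sorted_list_of_set E)) \<alpha>)"

definition formal_incl :: "'k::wellorder \<Rightarrow> 'k \<Rightarrow> bool" where
  "formal_incl \<alpha> \<beta> \<longleftrightarrow> Lset \<alpha> \<subseteq> Lset \<beta>"

definition ojoin :: "'k::wellorder \<Rightarrow> 'k \<Rightarrow> 'k" where
  "ojoin \<alpha> \<beta> = (THE \<gamma>. Lset \<gamma> = Lset \<alpha> \<union> Lset \<beta>)"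

definition fx :: "('k::wellorder \<Rightarrow> int) \<Rightarrow> 'k \<Rightarrow> int" where
  "fx x \<alpha> = (\<Sum>\<beta>\<in>{\<beta>. formal_incl \<beta> \<alpha>}. x \<beta>)"

definition euclidean_integers :: "(('k::wellorder \<Rightarrow> int) \<Rightarrow> 'z::linordered_idom) \<Rightarrow> bool" where
  "euclidean_integers S \<longleftrightarrow>
     (\<forall>z::'z. 0 < z \<longrightarrow> 1 \<le> z) \<and>
     (\<forall>x. finite {\<alpha>. x \<alpha> \<noteq> 0} \<longrightarrow> S x = of_int (\<Sum>\<alpha>\<in>{\<alpha>. x \<alpha> \<noteq> 0}. x \<alpha>)) \<and>
     surj S \<and>
     (\<forall>u v x y. of_int u * S x + of_int v * S y = S (\<lambda>\<alpha>. u * x \<alpha> + v * y \<alpha>)) \<and>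
     (\<forall>x y. (\<exists>\<theta>. \<forall>\<delta>. formal_incl \<theta> \<delta> \<longrightarrow> fx x \<delta> \<le> fx y \<delta>) \<longrightarrow> S x \<le> S y) \<and>
     (\<forall>x y. S x * S y =
        S (\<lambda>\<gamma>. \<Sum>(\<alpha>, \<beta>)\<in>{(\<alpha>, \<beta>). ojoin \<alpha> \<beta> = \<gamma>}. x \<alpha> * y \<beta>))"

end

theory Submission
  imports Defs "HOL-Library.Multiset_Order"
begin

text \<open>Because \<open>\<kappa>\<close> is an infinite cardinal, the finite subsets of \<open>\<kappa>\<close>, compared at the largest
  element of their symmetric difference, form a well-order of type \<open>\<kappa>\<close> (it is the multiset
  order restricted to sets). The resulting isomorphism \<open>N\<close> sends a finite set \<open>A\<close> to
  \<open>\<Sum>\<^sub>e\<^sub>\<in>\<^sub>A 2\<^sup>e\<close>, so it inverts \<open>L\<close> and turns \<open>\<or>\<close> into union. Computing the ordinal operations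
  through \<open>N\<close>: \<open>2\<^sup>\<eta> = N {\<eta>}\<close>, the exponents of \<open>P = 2\<^sup>\<eta>\<gamma>\<close> are all \<open>\<ge> \<eta>\<close>, and for
  \<open>\<alpha> < 2\<^sup>\<eta>\<close> the sum \<open>P + \<alpha>\<close> is the disjoint join \<open>\<alpha> \<or> P\<close>. Hence \<open>y\<close> is the
  \<open>\<or>\<close>-convolution of \<open>x\<close> with the point mass at \<open>P\<close>, whose sum is \<open>1\<close> by (0), and (PA) gives
  \<open>\<Sum> y = \<Sum> x \<cdot> 1\<close>.\<close>

unbundle cardinal_syntax

section \<open>Finite sets compared at their largest difference\<close>

lemma finless_iff_less_mset_set:
  fixes A B :: "'k::wellorder set"
  assumes "finite A" "finite B"
  shows "finless A B \<longleftrightarrow> mset_set A < mset_set B"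
proof -
  let ?D = "(A - B) \<union> (B - A)"
  have fin: "finite ?D" using assms by simp
  have "finless A B \<longleftrightarrow> A \<noteq> B \<and> (\<forall>y\<in>A - B. \<exists>x>y. x \<in> B - A)"
  proof (cases "A = B")
    case False
    then have ne: "?D \<noteq> {}" by auto
    have "Max ?D \<in> B \<longleftrightarrow> (\<forall>y\<in>A - B. \<exists>x>y. x \<in> B - A)"
    proof
      assume "Max ?D \<in> B"
      then show "\<forall>y\<in>A - B. \<exists>x>y. x \<in> B - A"
        using Max_in[OF fin ne] Max_ge[OF fin] by (metis DiffD2 DiffI Un_iff order_le_neq_trans)
    next
      assume "\<forall>y\<in>A - B. \<exists>x>y. x \<in> B - A"
      moreover have "Max ?D \<in> ?D" "\<And>x. x \<in> ?D \<Longrightarrow> x \<le> Max ?D"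
        using Max_in[OF fin ne] Max_ge[OF fin] by auto
      ultimately show "Max ?D \<in> B" by (meson DiffD1 UnE UnI2 leD)
    qed
    then show ?thesis unfolding finless_def by blast
  qed (simp add: finless_def)
  also have "\<dots> \<longleftrightarrow> mset_set A < mset_set B"
    unfolding less_multiset\<^sub>H\<^sub>O using assms by (auto simp: count_mset_set')
  finally show ?thesis .
qed

lemma finless_imp_bounded:
  fixes A B :: "'k::wellorder set"
  assumes "finite A" "finite B" "finless A B" "x \<in> A"
  shows "\<exists>y\<in>B. x \<le> y"
proof (cases "x \<in> B")
  case False
  then have "x \<le> Max ((A - B) \<union> (B - A))" using assms by (intro Max_ge) auto
  then show ?thesis using assms(3) unfolding finless_def by blast
qed auto

lemma finless_total: "finite A \<Longrightarrow> finite B \<Longrightarrow> A \<noteq> B \<Longrightarrow> finless A B \<or> finless B A"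
  using finless_iff_less_mset_set by (metis linorder_neqE mset_set_eq_iff)

lemma not_finless_empty: "\<not> finless A {}"
  unfolding finless_def by simp

lemma finless_singleton_iff:
  assumes "finite A"
  shows "finless A {e} \<longleftrightarrow> A \<subseteq> {..<e}"
proof
  assume less: "finless A {e}"
  have "e \<notin> A"
  proof
    assume "e \<in> A"
    then have D: "(A - {e}) \<union> ({e} - A) = A - {e}" and "A - {e} \<noteq> {}"
      using less unfolding finless_def by auto
    then have "Max (A - {e}) \<in> A - {e}" using assms by (intro Max_in) auto
    then show False using less D unfolding finless_def by auto
  qed
  moreover have "x \<le> e" if "x \<in> A" for x
    using finless_imp_bounded[OF assms _ less that] by simp
  ultimately show "A \<subseteq> {..<e}" by (auto simp: order_le_less)
next
  assume A: "A \<subseteq> {..<e}"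
  then have "Max ((A - {e}) \<union> ({e} - A)) = e"
    using assms by (intro Max_eqI) auto
  then show "finless A {e}" using A unfolding finless_def by auto
qed

lemma finless_Un_split:
  fixes t :: "'k::wellorder"
  assumes fin: "finite H" "finite H'" "finite L" "finite L'"
    and high: "H \<subseteq> {t..}" "H' \<subseteq> {t..}" and low: "L \<subseteq> {..<t}" "L' \<subseteq> {..<t}"
  shows "finless (H \<union> L) (H' \<union> L') \<longleftrightarrow> finless H H' \<or> (H = H' \<and> finless L L')"
proof -
  let ?DH = "(H - H') \<union> (H' - H)" and ?DL = "(L - L') \<union> (L' - L)"
  have disj: "H \<inter> L = {}" "H \<inter> L' = {}" "H' \<inter> L = {}" "H' \<inter> L' = {}"
    using high low by fastforce+
  then have D: "((H \<union> L) - (H' \<union> L')) \<union> ((H' \<union> L') - (H \<union> L)) = ?DH \<union> ?DL"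
    by blast
  show ?thesis
  proof (cases "H = H'")
    case True
    have "Max ?DL \<in> ?DL" if "L \<noteq> L'" using that fin by (intro Max_in) auto
    moreover have "H \<union> L = H' \<union> L' \<longleftrightarrow> L = L'" using disj True by blast
    ultimately show ?thesis using D True disj unfolding finless_def by auto
  next
    case False
    then have ne: "?DH \<noteq> {}" by auto
    have "Max (?DH \<union> ?DL) = Max ?DH"
    proof (rule Max_eqI)
      show "Max ?DH \<in> ?DH \<union> ?DL" using Max_in[OF _ ne] fin by simp
      have "t \<le> Max ?DH" using Max_in[OF _ ne] fin high by auto
      moreover have "y \<le> Max ?DH" if "y \<in> ?DH" for y using that fin by (intro Max_ge) auto
      moreover have "y < t" if "y \<in> ?DL" for y using that low by auto
      ultimately show "y \<le> Max ?DH" if "y \<in> ?DH \<union> ?DL" for y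
        using that by (meson UnE order.strict_implies_order order.strict_trans2)
    qed (use fin in simp)
    moreover have "Max ?DH \<in> ?DH" using Max_in[OF _ ne] fin by simp
    moreover have "H \<union> L \<noteq> H' \<union> L'" using False disj by blast
    ultimately show ?thesis using D False disj unfolding finless_def by auto
  qed
qed

section \<open>Well-orders of the type of an infinite cardinal\<close>

lemma Field_le_rel: "Field {(a::'a::preorder, b). a \<le> b} = UNIV"
  unfolding Field_def by auto

lemma Well_order_le_rel: "Well_order {(a::'a::wellorder, b). a \<le> b}"
proof -
  have "{(a::'a, b). a \<le> b} - Id = {(a, b). a < b}" by auto
  then have "wf ({(a::'a, b). a \<le> b} - Id)" using wf by simp
  then show ?thesis
    unfolding well_order_on_def linear_order_on_def partial_order_on_def preorder_on_def
      refl_on_def trans_def antisym_def total_on_def Field_le_rel by auto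
qed

lemma card_of_finite_ordLess_infinite: "finite A \<Longrightarrow> infinite B \<Longrightarrow> |A| <o |B|"
  using finite_ordLess_infinite[of "|A|" "|B|"] card_of_Well_order[of A] card_of_Well_order[of B]
  by (simp add: Field_card_of)

lemma card_order_le_rel_ordIso:
  assumes "card_order {(a::'k::wellorder, b). a \<le> b}"
  shows "{(a::'k, b). a \<le> b} =o |UNIV::'k set|"
  using card_of_Field_ordIso[of "{(a::'k, b). a \<le> b}"] assms
  by (simp add: Field_le_rel ordIso_symmetric)

lemma card_of_lessThan_ordLess:
  assumes "card_order {(a::'k::wellorder, b). a \<le> b}"
  shows "|{..<a::'k}| <o |UNIV::'k set|"
proof -
  have "underS {(a::'k, b). a \<le> b} a = {..<a}" unfolding underS_def by auto
  then show ?thesis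
    using card_of_underS[of "{(a::'k, b). a \<le> b}" a] assms card_order_le_rel_ordIso[OF assms]
    by (auto simp: Field_le_rel intro: ordLess_ordIso_trans)
qed

lemma card_of_atMost_ordLess:
  assumes "card_order {(a::'k::wellorder, b). a \<le> b}" "infinite (UNIV :: 'k set)"
  shows "|{..a::'k}| <o |UNIV::'k set|"
proof -
  have "|{a}| <o |UNIV::'k set|"
    using assms(2) card_of_finite_ordLess_infinite by blast
  then have "|{..<a} \<union> {a}| <o |UNIV::'k set|"
    by (rule card_of_Un_ordLess_infinite[OF assms(2) card_of_lessThan_ordLess[OF assms(1)]])
  moreover have "{..<a} \<union> {a} = {..a}" by auto
  ultimately show ?thesis by simp
qed

lemma card_of_atLeast_ordLeq:
  assumes "card_order {(a::'k::wellorder, b). a \<le> b}" "infinite (UNIV :: 'k set)"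
  shows "|UNIV::'k set| \<le>o |{a::'k..}|"
proof (rule ccontr)
  assume "\<not> |UNIV::'k set| \<le>o |{a..}|"
  then have "|{a..}| <o |UNIV::'k set|" using not_ordLeq_iff_ordLess card_of_Well_order by blast
  then have "|{..<a} \<union> {a..}| <o |UNIV::'k set|"
    by (rule card_of_Un_ordLess_infinite[OF assms(2) card_of_lessThan_ordLess[OF assms(1)]])
  moreover have "{..<a} \<union> {a..} = UNIV" by auto
  ultimately show False using ordLess_irreflexive by metis
qed

lemma card_of_finite_subsets_ordLeq:
  assumes inf: "infinite B"
  shows "|{X. X \<subseteq> B \<and> finite X}| \<le>o |B|"
proof -
  define G where "G n = {X. X \<subseteq> B \<and> finite X \<and> card X \<le> n}" for n
  have "|G n| \<le>o |B|" for n
  proof (induction n)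
    case 0
    have "G 0 \<subseteq> {{}}" unfolding G_def by auto
    moreover have "|{{}} :: 'a set set| \<le>o |B|"
      using card_of_finite_ordLess_infinite[of "{{}}" B] inf ordLess_imp_ordLeq by blast
    ultimately show ?case using card_of_mono1 ordLeq_transitive by blast
  next
    case (Suc n)
    have sub: "G (Suc n) \<subseteq> G n \<union> (\<lambda>(a, X). insert a X) ` (B \<times> G n)"
    proof
      fix X assume X: "X \<in> G (Suc n)"
      show "X \<in> G n \<union> (\<lambda>(a, X). insert a X) ` (B \<times> G n)"
      proof (cases "X = {}")
        case False
        then obtain a where a: "a \<in> X" by auto
        then have "X - {a} \<in> G n" "a \<in> B" using X unfolding G_def by auto
        moreover have "X = insert a (X - {a})" using a by auto
        ultimately show ?thesis by blast
      qed (simp add: G_def)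
    qed
    have "|B \<times> G n| \<le>o |B|"
      using card_of_Times_mono2[OF Suc] card_of_Times_same_infinite[OF inf] ordLeq_ordIso_trans
      by blast
    then have "|(\<lambda>(a, X). insert a X) ` (B \<times> G n)| \<le>o |B|"
      using card_of_image ordLeq_transitive by blast
    then have "|G n \<union> (\<lambda>(a, X). insert a X) ` (B \<times> G n)| \<le>o |B|"
      using card_of_Un_ordLeq_infinite_Field[of "|B|"] Suc inf
      by (simp add: Field_card_of card_of_Card_order card_of_card_order_on)
    then show ?case using sub card_of_mono1 ordLeq_transitive by blast
  qed
  then have "|\<Union>n. G n| \<le>o |B|"
    using card_of_UNION_ordLeq_infinite[OF inf] infinite_iff_card_of_nat inf by blast
  moreover have "{X. X \<subseteq> B \<and> finite X} = (\<Union>n. G n)" unfolding G_def by auto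
  ultimately show ?thesis by simp
qed

lemma card_of_finite_subsets_ordLess:
  assumes "infinite C" "|B| <o |C|"
  shows "|{X. X \<subseteq> B \<and> finite X}| <o |C|"
proof (cases "finite B")
  case True
  then have "finite {X. X \<subseteq> B \<and> finite X}" by simp
  then show ?thesis using assms(1) card_of_finite_ordLess_infinite by blast
next
  case False
  then show ?thesis using card_of_finite_subsets_ordLeq ordLeq_ordLess_trans assms(2) by blast
qed

lemma Well_order_ordIso_card_order:
  fixes r :: "'a rel"
  assumes card: "card_order {(a::'k::wellorder, b). a \<le> b}" and r: "Well_order r"
    and large: "|UNIV::'k set| \<le>o |Field r|"
    and small: "\<And>a. a \<in> Field r \<Longrightarrow> |underS r a| <o |UNIV::'k set|"
  shows "r =o {(a::'k, b). a \<le> b}"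
proof -
  let ?R = "{(a::'k, b). a \<le> b}"
  have R: "Well_order ?R" by (rule Well_order_le_rel)
  have RU: "?R =o |UNIV::'k set|" by (rule card_order_le_rel_ordIso[OF card])
  have "\<not> r <o ?R"
  proof
    assume "r <o ?R"
    then obtain a where a: "r =o Restr ?R (underS ?R a)"
      using ordLess_iff_ordIso_Restr[OF R r] by blast
    have "|Field r| \<le>o |underS ?R a|"
      by (rule ordIso_ordLeq_trans[OF card_of_cong[OF a] card_of_mono1[OF Field_Restr_subset]])
    moreover have "|underS ?R a| <o |UNIV::'k set|"
      using ordLess_ordIso_trans[OF card_of_underS RU] card by (simp add: Field_le_rel)
    ultimately show False
      using large not_ordLess_ordLeq[OF ordLeq_ordLess_trans] by blast
  qed
  moreover have "\<not> ?R <o r"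
  proof
    assume "?R <o r"
    then obtain a where a: "a \<in> Field r" "?R =o Restr r (underS r a)"
      using ordLess_iff_ordIso_Restr[OF r R] by blast
    have "|Field ?R| \<le>o |underS r a|"
      by (rule ordIso_ordLeq_trans[OF card_of_cong[OF a(2)] card_of_mono1[OF Field_Restr_subset]])
    then show False using small[OF a(1)] not_ordLess_ordLeq Field_le_rel by metis
  qed
  ultimately show ?thesis
    using ordLess_or_ordLeq[OF r R] ordLeq_iff_ordLess_or_ordIso ordIso_symmetric by blast
qed

lemma wellorder_set_iso_card_order:
  fixes D :: "'a::wellorder set"
  assumes card: "card_order {(a::'k::wellorder, b). a \<le> b}"
    and large: "|UNIV::'k set| \<le>o |D|"
    and small: "\<And>d. d \<in> D \<Longrightarrow> |{x\<in>D. x < d}| <o |UNIV::'k set|"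
  shows "\<exists>f::'a \<Rightarrow> 'k. bij_betw f D UNIV \<and> (\<forall>a\<in>D. \<forall>b\<in>D. a < b \<longleftrightarrow> f a < f b)"
proof -
  let ?r = "Restr {(a::'a, b). a \<le> b} D"
  have Fr: "Field ?r = D" unfolding Field_def by auto
  have "underS ?r d = {x\<in>D. x < d}" if "d \<in> D" for d
    using that unfolding underS_def by auto
  then have "?r =o {(a::'k, b). a \<le> b}"
    using large small
    by (intro Well_order_ordIso_card_order[OF card Well_order_Restr[OF Well_order_le_rel]])
      (simp_all add: Fr)
  then obtain f where "iso ?r {(a::'k, b). a \<le> b} f" unfolding ordIso_def by blast
  then show ?thesis unfolding iso_iff2 Fr Field_le_rel by (auto simp: not_le[symmetric])
qed

lemma exists_finite_set_coding:
  assumes card: "card_order {(a::'k::wellorder, b). a \<le> b}" and inf: "infinite (UNIV :: 'k set)"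
  shows "\<exists>N::'k set \<Rightarrow> 'k. bij_betw N {A. finite A} UNIV \<and>
           (\<forall>A B. finite A \<longrightarrow> finite B \<longrightarrow> N A < N B \<longleftrightarrow> finless A B)"
proof -
  let ?D = "mset_set ` {A::'k set. finite A}"
  have inj: "inj_on mset_set {A::'k set. finite A}" by (rule inj_onI) simp
  have "inj (\<lambda>x::'k. mset_set {x}) \<and> range (\<lambda>x. mset_set {x}) \<subseteq> ?D"
    by (auto simp: inj_def simp del: mset_set.insert intro!: image_eqI)
  then have large: "|UNIV::'k set| \<le>o |?D|" using card_of_ordLeq by blast
  have small: "|{M\<in>?D. M < d}| <o |UNIV::'k set|" if "d \<in> ?D" for d
  proof -
    obtain E where E: "finite E" "d = mset_set E" using \<open>d \<in> ?D\<close> by blast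
    have "{M\<in>?D. M < d} \<subseteq> mset_set ` {X. X \<subseteq> {..Max E} \<and> finite X}"
    proof clarify
      fix X :: "'k set" assume X: "finite X" "mset_set X < d"
      then have "finless X E" using E finless_iff_less_mset_set by blast
      have "x \<le> Max E" if "x \<in> X" for x
        using finless_imp_bounded[OF X(1) E(1) \<open>finless X E\<close> that] Max_ge[OF E(1)] order_trans by blast
      then have "X \<subseteq> {..Max E}" by auto
      then show "mset_set X \<in> mset_set ` {X. X \<subseteq> {..Max E} \<and> finite X}" using X by blast
    qed
    moreover have "|{X. X \<subseteq> {..Max E} \<and> finite X}| <o |UNIV::'k set|"
      by (rule card_of_finite_subsets_ordLess[OF inf card_of_atMost_ordLess[OF card inf]])
    ultimately show ?thesis
      using ordLeq_ordLess_trans[OF ordLeq_transitive[OF card_of_mono1 card_of_image]] by blast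
  qed
  obtain f :: "'k multiset \<Rightarrow> 'k" where f: "bij_betw f ?D UNIV" "\<forall>a\<in>?D. \<forall>b\<in>?D. a < b \<longleftrightarrow> f a < f b"
    using wellorder_set_iso_card_order[OF card large small] by blast
  have "bij_betw (f \<circ> mset_set) {A. finite A} UNIV"
    using bij_betw_trans[OF inj_on_imp_bij_betw[OF inj] f(1)] .
  moreover have "\<forall>A B. finite A \<longrightarrow> finite B \<longrightarrow> (f \<circ> mset_set) A < (f \<circ> mset_set) B \<longleftrightarrow> finless A B"
    using f(2) finless_iff_less_mset_set by auto
  ultimately show ?thesis by blast
qed

section \<open>Uniqueness of the ordinal operations\<close>

lemma ord_iso_on_sym:
  assumes "ord_iso_on lA A lB B"
  shows "ord_iso_on lB B lA A"
proof -
  obtain f where f: "bij_betw f A B" "\<forall>a\<in>A. \<forall>b\<in>A. lA a b \<longleftrightarrow> lB (f a) (f b)"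
    using assms unfolding ord_iso_on_def by blast
  have "lB a b \<longleftrightarrow> lA (inv_into A f a) (inv_into A f b)" if "a \<in> B" "b \<in> B" for a b
  proof -
    have "inv_into A f a \<in> A" "inv_into A f b \<in> A"
      using that bij_betwE[OF bij_betw_inv_into[OF f(1)]] by auto
    moreover have "f (inv_into A f a) = a" "f (inv_into A f b) = b"
      using that bij_betw_inv_into_right[OF f(1)] by auto
    ultimately show ?thesis using f(2) by metis
  qed
  then show ?thesis unfolding ord_iso_on_def using bij_betw_inv_into[OF f(1)] by blast
qed

lemma ord_iso_on_trans:
  assumes "ord_iso_on lA A lB B" "ord_iso_on lB B lC C"
  shows "ord_iso_on lA A lC C"
proof -
  obtain f where f: "bij_betw f A B" "\<forall>a\<in>A. \<forall>b\<in>A. lA a b \<longleftrightarrow> lB (f a) (f b)"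
    using assms(1) unfolding ord_iso_on_def by blast
  obtain g where g: "bij_betw g B C" "\<forall>a\<in>B. \<forall>b\<in>B. lB a b \<longleftrightarrow> lC (g a) (g b)"
    using assms(2) unfolding ord_iso_on_def by blast
  show ?thesis unfolding ord_iso_on_def
    using bij_betw_trans[OF f(1) g(1)] f(2) g(2) bij_betwE[OF f(1)] by auto
qed

lemma ord_iso_on_lessI:
  fixes f :: "'a \<Rightarrow> 'b::order"
  assumes "f ` A = B" "\<And>a b. a \<in> A \<Longrightarrow> b \<in> A \<Longrightarrow> lA a b \<longleftrightarrow> f a < f b"
    and "\<And>a b. a \<in> A \<Longrightarrow> b \<in> A \<Longrightarrow> a \<noteq> b \<Longrightarrow> lA a b \<or> lA b a"
  shows "ord_iso_on lA A (<) B"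
proof -
  have "inj_on f A" by (rule inj_onI) (metis assms(2,3) less_irrefl)
  then show ?thesis unfolding ord_iso_on_def bij_betw_def using assms(1,2) by blast
qed

lemma ord_iso_on_interval_eq:
  fixes p d d' :: "'k::wellorder"
  assumes iso: "ord_iso_on (<) {p..<d} (<) {p..<d'}"
  shows "{p..<d} = {p..<d'}"
proof -
  obtain f where f: "bij_betw f {p..<d} {p..<d'}" "\<forall>a\<in>{p..<d}. \<forall>b\<in>{p..<d}. a < b \<longleftrightarrow> f a < f b"
    using iso unfolding ord_iso_on_def by blast
  have "x \<in> {p..<d} \<longrightarrow> f x = x" for x
  proof (induction x rule: less_induct)
    case (less x)
    show ?case
    proof
      assume x: "x \<in> {p..<d}"
      have fx: "f x \<in> {p..<d'}" using bij_betwE[OF f(1)] x by blast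
      show "f x = x"
      proof (rule linorder_cases)
        assume "f x < x"
        then have "f x \<in> {p..<d}" "f (f x) = f x" using less fx x by auto
        then show ?thesis using f x \<open>f x < x\<close> by auto
      next
        assume "x < f x"
        then have "x \<in> f ` {p..<d}" using f(1) fx x unfolding bij_betw_def by auto
        then obtain y where y: "y \<in> {p..<d}" "f y = x" by blast
        then have "y < x" using f(2) x \<open>x < f x\<close> by auto
        then show ?thesis using less y by auto
      qed
    qed
  qed
  then have "f ` {p..<d} = {p..<d}" by (auto intro: image_eqI)
  then show ?thesis using f(1) unfolding bij_betw_def by simp
qed

lemma atLeastLessThan_eq_right:
  fixes p d d' :: "'k::linorder"
  assumes "p \<le> d" "p \<le> d'" "{p..<d} = {p..<d'}"
  shows "d = d'"
proof (rule linorder_cases[of d d'])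
  assume "d < d'"
  then have "d \<in> {p..<d}" unfolding assms(3) using assms(1) by simp
  then show ?thesis by simp
next
  assume "d' < d"
  then have "d' \<in> {p..<d'}" unfolding assms(3)[symmetric] using assms(2) by simp
  then show ?thesis by simp
qed

lemma ozero_le: "ozero \<le> (x::'k::wellorder)"
  unfolding ozero_def by (rule Least_le) simp

lemma not_less_ozero: "\<not> x < ozero"
  using ozero_le by (simp add: not_less)

lemma lessThan_eq_atLeastLessThan_ozero: "{..<d} = {ozero..<d::'k::wellorder}"
  using ozero_le by auto

lemma ord_iso_on_lessThan_eq:
  assumes "ord_iso_on (<) {..<d} (<) {..<d'::'k::wellorder}"
  shows "d = d'"
  using assms unfolding lessThan_eq_atLeastLessThan_ozero
  by (intro atLeastLessThan_eq_right[OF ozero_le ozero_le] ord_iso_on_interval_eq)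

lemma is_opow2_unique:
  assumes "is_opow2 e d" "is_opow2 e d'"
  shows "d = d'"
  using assms unfolding is_opow2_def lessThan_def[symmetric]
  by (intro ord_iso_on_lessThan_eq) (rule ord_iso_on_trans[OF ord_iso_on_sym])

lemma is_omul_unique:
  assumes "is_omul a b d" "is_omul a b d'"
  shows "d = d'"
  using assms unfolding is_omul_def lessThan_def[symmetric]
  by (intro ord_iso_on_lessThan_eq) (rule ord_iso_on_trans[OF ord_iso_on_sym])

lemma is_oadd_unique:
  assumes "is_oadd a b d" "is_oadd a b d'"
  shows "d = d'"
proof -
  have "{x. a \<le> x \<and> x < c} = {a..<c}" for c by auto
  then have "a \<le> d" "a \<le> d'" "ord_iso_on (<) {a..<d} (<) {a..<d'}"
    using assms unfolding is_oadd_def by (auto intro: ord_iso_on_trans[OF ord_iso_on_sym])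
  then show ?thesis by (intro atLeastLessThan_eq_right ord_iso_on_interval_eq)
qed

lemma sum_subsingleton:
  assumes "\<And>a b. P a \<Longrightarrow> P b \<Longrightarrow> a = b"
  shows "(\<Sum>a\<in>{a. P a}. f a) = (if \<exists>a. P a then f (THE a. P a) else 0)"
proof (cases "\<exists>a. P a")
  case True
  then obtain a where "P a" by blast
  with assms have "{a. P a} = {a}" "(THE a. P a) = a" by (auto intro: the_equality)
  then show ?thesis using True by simp
qed simp

lemma euclidean_integers_point_mass:
  assumes "euclidean_integers S"
  shows "S (\<lambda>\<delta>. if \<delta> = p then 1 else 0) = 1"
proof -
  have "{\<delta>. (if \<delta> = p then 1 else 0) \<noteq> (0::int)} = {p}" by auto
  then show ?thesis using assms unfolding euclidean_integers_def by simp
qed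

lemma euclidean_integers_mult:
  assumes "euclidean_integers S"
  shows "S x * S y = S (\<lambda>\<gamma>. \<Sum>(\<alpha>, \<beta>)\<in>{(\<alpha>, \<beta>). ojoin \<alpha> \<beta> = \<gamma>}. x \<alpha> * y \<beta>)"
  using assms unfolding euclidean_integers_def by blast

section \<open>Ordinals as finite sets of exponents\<close>

text \<open>\<open>N A\<close> is the ordinal \<open>\<Sum>\<^sub>e\<^sub>\<in>\<^sub>A 2\<^sup>e\<close> and \<open>exps\<close> is the map \<open>L\<close> of normal-form exponents
  (see \<open>Lset_eq\<close>).\<close>

locale finite_set_coding =
  fixes N :: "'k::wellorder set \<Rightarrow> 'k"
  assumes bij_N: "bij_betw N {A. finite A} UNIV"
    and N_less_iff: "finite A \<Longrightarrow> finite B \<Longrightarrow> N A < N B \<longleftrightarrow> finless A B"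
begin

definition exps :: "'k \<Rightarrow> 'k set" where
  "exps = inv_into {A. finite A} N"

definition join :: "'k \<Rightarrow> 'k \<Rightarrow> 'k" where
  "join a b = N (exps a \<union> exps b)"

definition high :: "'k \<Rightarrow> 'k \<Rightarrow> 'k" where
  "high t y = N (exps y \<inter> {t..})"

definition low :: "'k \<Rightarrow> 'k \<Rightarrow> 'k" where
  "low t y = N (exps y \<inter> {..<t})"

lemma finite_exps [simp]: "finite (exps a)"
  unfolding exps_def using bij_betw_inv_into[OF bij_N] bij_betwE by fastforce

lemma N_exps [simp]: "N (exps a) = a"
  unfolding exps_def using bij_N by (simp add: bij_betw_def f_inv_into_f)

lemma exps_N [simp]: "finite A \<Longrightarrow> exps (N A) = A"
  unfolding exps_def using bij_N by (simp add: bij_betw_def)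

lemma exps_inject: "exps a = exps b \<longleftrightarrow> a = b"
  by (metis N_exps)

lemma N_empty: "N {} = ozero"
proof -
  have "\<not> x < N {}" for x
    using N_less_iff[of "exps x" "{}"] not_finless_empty by simp
  then show ?thesis using ozero_le[of "N {}"] by (simp add: not_less order.antisym)
qed

lemma exps_ozero [simp]: "exps ozero = {}"
  using exps_N[of "{}"] by (simp add: N_empty)

lemma less_N_singleton_iff: "a < N {e} \<longleftrightarrow> exps a \<subseteq> {..<e}"
  using N_less_iff[of "exps a" "{e}"] finless_singleton_iff[of "exps a" e] by simp

lemma ozero_less_N_singleton: "ozero < N {t}"
  by (simp add: less_N_singleton_iff)

lemma join_ozero [simp]: "join h ozero = h"
  unfolding join_def by simp

lemma exps_high: "exps (high t y) = exps y \<inter> {t..}"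
  unfolding high_def by simp

lemma low_less: "low t y < N {t}"
  unfolding low_def by (simp add: less_N_singleton_iff)

lemma join_high_low: "join (high t y) (low t y) = y"
proof -
  have "(exps y \<inter> {t..}) \<union> (exps y \<inter> {..<t}) = exps y" by auto
  then show ?thesis unfolding join_def high_def low_def by simp
qed

lemma join_less_join_iff:
  assumes "exps h \<subseteq> {t..}" "exps h' \<subseteq> {t..}" "a < N {t}" "a' < N {t}"
  shows "join h a < join h' a' \<longleftrightarrow> h < h' \<or> (h = h' \<and> a < a')"
proof -
  have "N (exps h \<union> exps a) < N (exps h' \<union> exps a') \<longleftrightarrow>
      finless (exps h) (exps h') \<or> (exps h = exps h' \<and> finless (exps a) (exps a'))"
    using assms finless_Un_split[of "exps h" "exps h'" "exps a" "exps a'" t]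
    by (simp add: N_less_iff less_N_singleton_iff)
  then show ?thesis unfolding join_def exps_inject using N_less_iff[of "exps _" "exps _"] by simp
qed

lemma is_opow2_N_singleton: "is_opow2 e (N {e})"
  unfolding is_opow2_def
proof (rule ord_iso_on_lessI)
  have "N A < N {e}" if "finite A" "A \<subseteq> {x. x < e}" for A
    using that less_N_singleton_iff by auto
  moreover have "x \<in> N ` {A. finite A \<and> A \<subseteq> {x. x < e}}" if "x < N {e}" for x
    using that less_N_singleton_iff by (auto intro!: image_eqI[of x N "exps x"])
  ultimately show "N ` {A. finite A \<and> A \<subseteq> {x. x < e}} = {x. x < N {e}}" by auto
qed (auto simp: N_less_iff dest: finless_total)

lemma is_opow2_iff: "is_opow2 e d \<longleftrightarrow> d = N {e}"
  using is_opow2_N_singleton is_opow2_unique by blast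

lemma opow2_eq: "opow2 e = N {e}"
  unfolding opow2_def is_opow2_iff by simp

lemma is_oadd_join:
  assumes h: "exps h \<subseteq> {t..}" and b: "b < N {t}"
  shows "is_oadd h b (join h b)"
proof -
  have lex: "join h a < join h a' \<longleftrightarrow> a < a'" if "a < N {t}" "a' < N {t}" for a a'
    using join_less_join_iff[OF h h that] by simp
  have h_le: "h \<le> join h a" if "a < N {t}" for a
    using lex[OF that ozero_less_N_singleton] by (simp add: not_less_ozero flip: not_less)
  have "join h ` {x. x < b} = {y. h \<le> y \<and> y < join h b}"
  proof
    show "join h ` {x. x < b} \<subseteq> {y. h \<le> y \<and> y < join h b}"
      using h_le lex b by (auto dest: less_trans)
    show "{y. h \<le> y \<and> y < join h b} \<subseteq> join h ` {x. x < b}"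
    proof clarify
      fix y assume y: "h \<le> y" "y < join h b"
      have hy: "exps (high t y) \<subseteq> {t..}" by (simp add: exps_high)
      have "\<not> join (high t y) (low t y) < join h ozero" using y(1) by (simp add: join_high_low)
      moreover have "join (high t y) (low t y) < join h b" using y(2) by (simp add: join_high_low)
      ultimately have "high t y = h" "low t y < b"
        using join_less_join_iff[OF hy h low_less ozero_less_N_singleton]
          join_less_join_iff[OF hy h low_less b] by (auto simp: not_less_ozero)
      then show "y \<in> join h ` {x. x < b}"
        using join_high_low[of t y] by (auto intro!: image_eqI[of _ _ "low t y"])
    qed
  qed
  then show ?thesis unfolding is_oadd_def
    using lex b h_le[OF b] by (intro conjI ord_iso_on_lessI[where f = "join h"]) (auto dest: less_trans)
qed

lemma oadd_join: "exps h \<subseteq> {t..} \<Longrightarrow> a < N {t} \<Longrightarrow> oadd h a = join h a"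
  unfolding oadd_def by (auto intro: the_equality is_oadd_unique is_oadd_join)

lemma is_nfsum_iff: "sorted_wrt (>) es \<Longrightarrow> is_nfsum es \<delta> \<longleftrightarrow> \<delta> = N (set es)"
proof (induction es arbitrary: \<delta>)
  case Nil
  then show ?case by (simp add: N_empty)
next
  case (Cons e es)
  then have "N (set es) < N {e}" "sorted_wrt (>) es" by (auto simp: less_N_singleton_iff)
  then have "is_nfsum (e # es) \<delta> \<longleftrightarrow> is_oadd (N {e}) (N (set es)) \<delta>"
    using Cons.IH by (simp add: is_opow2_iff)
  also have "\<dots> \<longleftrightarrow> \<delta> = join (N {e}) (N (set es))"
    using is_oadd_join[of "N {e}" e "N (set es)"] is_oadd_unique \<open>N (set es) < N {e}\<close> by auto
  finally show ?case by (simp add: join_def)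
qed

lemma Lset_eq: "Lset \<delta> = exps \<delta>"
proof -
  have "is_nfsum (rev (sorted_list_of_set E)) \<delta> \<longleftrightarrow> \<delta> = N E" if "finite E" for E
    using that is_nfsum_iff[of "rev (sorted_list_of_set E)"] strict_sorted_list_of_set[of E]
    by (simp add: sorted_wrt_rev)
  then show ?thesis unfolding Lset_def
    by (intro the_equality) (simp, metis exps_N)
qed

lemma ojoin_eq: "ojoin a b = join a b"
  unfolding ojoin_def Lset_eq join_def by (rule the_equality) (simp, metis N_exps)

lemma is_omul_N_singleton:
  assumes M: "bij_betw M UNIV {h. exps h \<subseteq> {\<eta>..}}" and M_less_iff: "\<And>a b. M a < M b \<longleftrightarrow> a < b"
  shows "is_omul (N {\<eta>}) \<gamma> (M \<gamma>)"
proof -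
  let ?A = "{x. x < \<gamma>} \<times> {x. x < N {\<eta>}}"
  let ?f = "\<lambda>(g, a). join (M g) a"
  have high_M: "exps (M g) \<subseteq> {\<eta>..}" for g using bij_betwE[OF M] by blast
  have lex: "?f (g, a) < ?f (g', a') \<longleftrightarrow> g < g' \<or> (g = g' \<and> a < a')"
    if "a < N {\<eta>}" "a' < N {\<eta>}" for g a g' a'
    using join_less_join_iff[OF high_M high_M that] M_less_iff inj_eq[OF bij_betw_imp_inj_on[OF M]]
    by simp
  have "?f ` ?A = {x. x < M \<gamma>}"
  proof
    show "?f ` ?A \<subseteq> {x. x < M \<gamma>}"
      using lex[OF _ ozero_less_N_singleton] by auto
    show "{x. x < M \<gamma>} \<subseteq> ?f ` ?A"
    proof clarify
      fix y assume "y < M \<gamma>"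
      then have "join (high \<eta> y) (low \<eta> y) < join (M \<gamma>) ozero" by (simp add: join_high_low)
      moreover have hy: "high \<eta> y \<in> {h. exps h \<subseteq> {\<eta>..}}" by (simp add: exps_high)
      ultimately have "high \<eta> y < M \<gamma>"
        using join_less_join_iff[OF _ high_M low_less ozero_less_N_singleton] by (auto simp: not_less_ozero)
      moreover obtain g where g: "M g = high \<eta> y"
        using hy M unfolding bij_betw_def by (metis UNIV_I imageE)
      ultimately have "g < \<gamma>" using M_less_iff[of g \<gamma>] by simp
      then show "y \<in> ?f ` ?A"
        using g low_less join_high_low[of \<eta> y] by (auto intro!: image_eqI[of _ _ "(g, low \<eta> y)"])
    qed
  qed
  then show ?thesis unfolding is_omul_def
    using lex by (intro ord_iso_on_lessI) (auto simp: lexless_def)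
qed

lemma omul_N_singleton:
  assumes "bij_betw M UNIV {h. exps h \<subseteq> {\<eta>..}}" "\<And>a b. M a < M b \<longleftrightarrow> a < b"
  shows "omul (N {\<eta>}) \<gamma> = M \<gamma>"
  unfolding omul_def using is_omul_N_singleton[OF assms] by (auto intro: the_equality is_omul_unique)

lemma exists_iso_high:
  assumes card: "card_order {(a::'k, b). a \<le> b}" and inf: "infinite (UNIV :: 'k set)"
  shows "\<exists>M::'k \<Rightarrow> 'k. bij_betw M UNIV {h. exps h \<subseteq> {\<eta>..}} \<and> (\<forall>a b. M a < M b \<longleftrightarrow> a < b)"
proof -
  let ?D = "{h. exps h \<subseteq> {\<eta>..}}"
  have "inj_on (\<lambda>x. N {x}) {\<eta>..} \<and> (\<lambda>x. N {x}) ` {\<eta>..} \<subseteq> ?D"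
    by (auto simp: inj_on_def dest: arg_cong[of _ _ exps])
  then have "|{\<eta>..}| \<le>o |?D|" using card_of_ordLeq by blast
  then have large: "|UNIV::'k set| \<le>o |?D|"
    by (rule ordLeq_transitive[OF card_of_atLeast_ordLeq[OF card inf]])
  have "{x\<in>?D. x < d} \<subseteq> {..<d}" for d by auto
  then have small: "|{x\<in>?D. x < d}| <o |UNIV::'k set|" for d
    by (rule ordLeq_ordLess_trans[OF card_of_mono1 card_of_lessThan_ordLess[OF card]])
  obtain f :: "'k \<Rightarrow> 'k" where f: "bij_betw f ?D UNIV" "\<forall>a\<in>?D. \<forall>b\<in>?D. a < b \<longleftrightarrow> f a < f b"
    using wellorder_set_iso_card_order[OF card large small] by blast
  define M where "M = inv_into ?D f"
  have M: "bij_betw M UNIV ?D" unfolding M_def by (rule bij_betw_inv_into[OF f(1)])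
  have fM: "f (M a) = a" for a unfolding M_def using f(1) bij_betw_inv_into_right by fastforce
  have MD: "M a \<in> ?D" for a using bij_betwE[OF M] by simp
  have "M a < M b \<longleftrightarrow> f (M a) < f (M b)" for a b by (rule f(2)[rule_format, OF MD MD])
  then have "M a < M b \<longleftrightarrow> a < b" for a b unfolding fM .
  with M show ?thesis by blast
qed

lemma exps_omul_opow2:
  assumes "card_order {(a::'k, b). a \<le> b}" "infinite (UNIV :: 'k set)"
  shows "exps (omul (opow2 \<eta>) \<gamma>) \<subseteq> {\<eta>..}"
proof -
  obtain M :: "'k \<Rightarrow> 'k" where M: "bij_betw M UNIV {h. exps h \<subseteq> {\<eta>..}}"
    and "\<forall>a b. M a < M b \<longleftrightarrow> a < b"
    using exists_iso_high[OF assms] by blast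
  then have "omul (opow2 \<eta>) \<gamma> = M \<gamma>" unfolding opow2_eq by (intro omul_N_singleton) simp_all
  then show ?thesis using bij_betwE[OF M] by simp
qed

lemma finite_ojoin_preimage: "finite {(a, b). ojoin a b = (\<delta>::'k)}"
proof -
  have "a \<in> N ` Pow (exps \<delta>) \<and> b \<in> N ` Pow (exps \<delta>)" if "ojoin a b = \<delta>" for a b
  proof -
    have "exps a \<union> exps b = exps \<delta>"
      using that exps_N[of "exps a \<union> exps b"] unfolding ojoin_eq join_def by simp
    then show ?thesis using N_exps by (metis Pow_iff Un_upper1 Un_upper2 image_eqI)
  qed
  then have "{(a, b). ojoin a b = \<delta>} \<subseteq> N ` Pow (exps \<delta>) \<times> N ` Pow (exps \<delta>)" by blast
  then show ?thesis by (rule finite_subset) simp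
qed

lemma sum_ojoin_point_mass:
  fixes x :: "'k \<Rightarrow> 'a::comm_semiring_1"
  shows "(\<Sum>(a, b)\<in>{(a, b). ojoin a b = \<delta>}. x a * (if b = p then 1 else 0)) =
    (\<Sum>a\<in>{a. ojoin a p = \<delta>}. x a)"
proof -
  have "(\<Sum>(a, b)\<in>{(a, b). ojoin a b = \<delta>}. x a * (if b = p then 1 else 0)) =
      (\<Sum>(a, b)\<in>(\<lambda>a. (a, p)) ` {a. ojoin a p = \<delta>}. x a * (if b = p then 1 else 0))"
    by (rule sum.mono_neutral_right[OF finite_ojoin_preimage]) auto
  also have "\<dots> = (\<Sum>a\<in>{a. ojoin a p = \<delta>}. x a)"
    by (subst sum.reindex) (auto simp: inj_on_def)
  finally show ?thesis .
qed

lemma ojoin_point_mass_convolution: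
  fixes x :: "'k \<Rightarrow> 'a::comm_semiring_1"
  assumes high: "exps p \<subseteq> {t..}" and x_zero: "\<And>a. N {t} \<le> a \<Longrightarrow> x a = 0"
  shows "(\<Sum>(a, b)\<in>{(a, b). ojoin a b = \<delta>}. x a * (if b = p then 1 else 0)) =
    (if \<exists>a. a < N {t} \<and> \<delta> = oadd p a then x (THE a. a < N {t} \<and> \<delta> = oadd p a) else 0)"
    (is "_ = ?rhs")
proof -
  have oadd: "oadd p a = ojoin a p" if "a < N {t}" for a
    using oadd_join[OF high that] by (simp add: ojoin_eq join_def Un_commute)
  have inj: "a = b" if "a < N {t}" "b < N {t}" "oadd p a = oadd p b" for a b
    using that join_less_join_iff[OF high high, of a b] join_less_join_iff[OF high high, of b a]
    by (metis less_irrefl linorder_neqE oadd_join[OF high])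
  have "(\<Sum>(a, b)\<in>{(a, b). ojoin a b = \<delta>}. x a * (if b = p then 1 else 0)) =
      (\<Sum>a\<in>{a. ojoin a p = \<delta>}. x a)"
    by (rule sum_ojoin_point_mass)
  also have "\<dots> = (\<Sum>a\<in>{a. a < N {t} \<and> \<delta> = oadd p a}. x a)"
  proof (rule sum.mono_neutral_right)
    have "{a. ojoin a p = \<delta>} \<subseteq> fst ` {(a, b). ojoin a b = \<delta>}"
      by (auto intro: image_eqI[of _ fst "(_, p)"])
    then show "finite {a. ojoin a p = \<delta>}"
      by (rule finite_subset) (rule finite_imageI[OF finite_ojoin_preimage])
    show "\<forall>a\<in>{a. ojoin a p = \<delta>} - {a. a < N {t} \<and> \<delta> = oadd p a}. x a = 0"
      using oadd x_zero by (metis (mono_tags, lifting) DiffE mem_Collect_eq not_less)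
  qed (use oadd in auto)
  also have "\<dots> = ?rhs"
    by (rule sum_subsingleton) (use inj in blast)
  finally show ?thesis .
qed

end

theorem mainTheorem4:
  fixes S :: "('k::wellorder \<Rightarrow> int) \<Rightarrow> 'z::linordered_idom"
    and \<eta> \<gamma> :: 'k and x :: "'k \<Rightarrow> int"
  assumes "card_order {(a::'k, b). a \<le> b}"
    and "infinite (UNIV :: 'k set)"
    and "euclidean_integers S"
    and "\<forall>\<alpha>. opow2 \<eta> \<le> \<alpha> \<longrightarrow> x \<alpha> = 0"
  shows "S x = S (\<lambda>\<delta>. if \<exists>\<alpha>. \<alpha> < opow2 \<eta> \<and> \<delta> = oadd (omul (opow2 \<eta>) \<gamma>) \<alpha>
                        then x (THE \<alpha>. \<alpha> < opow2 \<eta> \<and> \<delta> = oadd (omul (opow2 \<eta>) \<gamma>) \<alpha>)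
                        else 0)"
proof -
  obtain N :: "'k set \<Rightarrow> 'k" where "bij_betw N {A. finite A} UNIV"
    and "\<forall>A B. finite A \<longrightarrow> finite B \<longrightarrow> N A < N B \<longleftrightarrow> finless A B"
    using exists_finite_set_coding[OF assms(1,2)] by blast
  then interpret finite_set_coding N by unfold_locales auto
  let ?P = "omul (opow2 \<eta>) \<gamma>"
  have convolution: "(\<Sum>(a, b)\<in>{(a, b). ojoin a b = \<delta>}. x a * (if b = ?P then 1 else 0)) =
      (if \<exists>\<alpha>. \<alpha> < opow2 \<eta> \<and> \<delta> = oadd ?P \<alpha> then x (THE \<alpha>. \<alpha> < opow2 \<eta> \<and> \<delta> = oadd ?P \<alpha>) else 0)"
    for \<delta>
    unfolding opow2_eq
    by (rule ojoin_point_mass_convolution[OF exps_omul_opow2[OF assms(1,2), unfolded opow2_eq]])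
      (use assms(4) in \<open>simp add: opow2_eq\<close>)
  have "S x = S x * S (\<lambda>b. if b = ?P then 1 else 0)"
    using euclidean_integers_point_mass[OF assms(3)] by simp
  also have "\<dots> = S (\<lambda>\<delta>. \<Sum>(a, b)\<in>{(a, b). ojoin a b = \<delta>}. x a * (if b = ?P then 1 else 0))"
    by (rule euclidean_integers_mult[OF assms(3)])
  finally show ?thesis unfolding convolution .
qed

end
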